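(* Let $L$ be an infinite set and let $Q$ be either the edgeless cube $Q_L$ or the edged cube $\bar Q_L$. If $f_0$ is an illegal configuration, then for every basic sequence, its terminal configuration when applied to $f_0$ is illegal; i.e., no legal configuration is accessible from an illegal one.
   Context: Let $L$ be an infinite set, $-L=\{-r:r\in L\}$ a disjoint copy of $L$, and $0$ a new element; $L^\dagger=-L\cup\{0\}\cup L$ with $-(-r)=r$, $-0=0$. Adjoin $\pm\infty$ with $-(+\infty)=-\infty$ and set $\bar L^\dagger=L^\dagger\cup\{\pm\infty\}$. Points of $U=(\bar L^\dagger)^3$ have coordinates $x,y,z$. The edgeless cube $Q_L$ is the set of points of $U$ with exactly one coordinate in $\{\pm\infty\}$ (cells). The edged cube $\bar Q_L$ is the set of cells $(p,i)$ with $p\in U$, $i\in\{x,y,z\}$, $p_i\in\{\pm\infty\}$ ($i$ marks the face). For $i\in\{x,y,z\}$, $\alpha\in\bar L^\dagger$, the quarter-turn twist $T_{i,\alpha}$ is the permutation of cells fixing every cell whose point $p$ has $p_i\ne\alpha$ and acting on the others by $T_{x,\alpha}(\alpha,y,z)=(\alpha,-z,y)$, $T_{y,\alpha}(x,\alpha,z)=(z,\alpha,-x)$, $T_{z,\alpha}(x,y,\alpha)=(-y,x,\alpha)$ (in $\bar Q_L$ the marked coordinate is carried along by the rotation). Basic twists are $T,T^2,T^3$ for quarter-turn twists $T$. A basic sequence is a sequence $\langle\sigma_\eta:\eta<\theta\rangle$ of basic twists of ordinal length $\theta$. A configuration is a map $f$ from cells to the six colors red, white, green, orange, yellow, blue together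 with a special value NaC; it is legal if it never takes value NaC and illegal otherwise. A twist $\sigma$ acts by $(\sigma f)(c)=f(\sigma^{-1}c)$. Applying $\langle\sigma_\eta:\eta<\theta\rangle$ to $f_0$ produces $f_{\eta+1}=\sigma_\eta f_\eta$, and for limit $\lambda\le\theta$, $f_\lambda(c)$ is the eventually constant value of $f_\eta(c)$ ($\eta<\lambda$) if it exists and NaC otherwise; $f_\theta$ is the terminal configuration. $f$ is accessible from $f_0$ if it is the terminal configuration of some basic sequence applied to $f_0$. *)

theory Defs
  imports Main
begin

text \<open>Elements of the extended set: L-dagger together with plus/minus infinity.
  L is represented by a type 'l (assumed infinite in the theorem).\<close>
datatype 'l coord = Neg 'l | Zero | Pos 'l | PInf | NInf

fun cneg :: "'l coord \<Rightarrow> 'l coord" where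
  "cneg (Neg r) = Pos r"
| "cneg Zero = Zero"
| "cneg (Pos r) = Neg r"
| "cneg PInf = NInf"
| "cneg NInf = PInf"

definition is_inf :: "'l coord \<Rightarrow> bool" where
  "is_inf a \<longleftrightarrow> a = PInf \<or> a = NInf"

type_synonym 'l point = "'l coord \<times> 'l coord \<times> 'l coord"

datatype axis = AX | AY | AZ

fun pcoord :: "'l point \<Rightarrow> axis \<Rightarrow> 'l coord" where
  "pcoord (x, y, z) AX = x"
| "pcoord (x, y, z) AY = y"
| "pcoord (x, y, z) AZ = z"

definition edgeless_cells :: "'l point set" where
  "edgeless_cells = {p. card {i. is_inf (pcoord p i)} = 1}"

definition edged_cells :: "('l point \<times> axis) set" where
  "edged_cells = {(p, i). is_inf (pcoord p i)}"

fun rot :: "axis \<Rightarrow> 'l point \<Rightarrow> 'l point" where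
  "rot AX (x, y, z) = (x, cneg z, y)"
| "rot AY (x, y, z) = (z, y, cneg x)"
| "rot AZ (x, y, z) = (cneg y, x, z)"

definition twist_pt :: "axis \<Rightarrow> 'l coord \<Rightarrow> 'l point \<Rightarrow> 'l point" where
  "twist_pt i \<alpha> p = (if pcoord p i = \<alpha> then rot i p else p)"

text \<open>How the rotation about axis i carries the marked coordinate.\<close>
fun rot_axis :: "axis \<Rightarrow> axis \<Rightarrow> axis" where
  "rot_axis AX AX = AX" | "rot_axis AX AY = AZ" | "rot_axis AX AZ = AY"
| "rot_axis AY AX = AZ" | "rot_axis AY AY = AY" | "rot_axis AY AZ = AX"
| "rot_axis AZ AX = AY" | "rot_axis AZ AY = AX" | "rot_axis AZ AZ = AZ"

definition twist_edged :: "axis \<Rightarrow> 'l coord \<Rightarrow> ('l point \<times> axis) \<Rightarrow> ('l point \<times> axis)" where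
  "twist_edged i \<alpha> c = (if pcoord (fst c) i = \<alpha> then (rot i (fst c), rot_axis i (snd c)) else c)"

definition basic_edgeless :: "('l point \<Rightarrow> 'l point) set" where
  "basic_edgeless = {(twist_pt i \<alpha>) ^^ k | i \<alpha> k. k \<in> {1, 2, 3::nat}}"

definition basic_edged :: "(('l point \<times> axis) \<Rightarrow> ('l point \<times> axis)) set" where
  "basic_edged = {(twist_edged i \<alpha>) ^^ k | i \<alpha> k. k \<in> {1, 2, 3::nat}}"

datatype color = Red | White | Green | Orange | Yellow | Blue

text \<open>Configurations: None plays the role of NaC.\<close>
type_synonym 'c config = "'c \<Rightarrow> color option"

definition legal :: "'c set \<Rightarrow> 'c config \<Rightarrow> bool" where
  "legal Cells f \<longleftrightarrow> (\<forall>c\<in>Cells. f c \<noteq> None)"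

definition act :: "('c \<Rightarrow> 'c) \<Rightarrow> 'c config \<Rightarrow> 'c config" where
  "act \<sigma> f = (\<lambda>c. f (inv \<sigma> c))"

text \<open>Ordinals are represented by elements of a well-ordered type 'o;
  the successor of \<eta> is the least element above \<eta>, limits are elements that are
  neither least nor successors.\<close>
definition osucc :: "'o::wellorder \<Rightarrow> 'o" where
  "osucc \<eta> = (LEAST \<zeta>. \<eta> < \<zeta>)"

definition is_limit :: "'o::wellorder \<Rightarrow> bool" where
  "is_limit lam \<longleftrightarrow> (\<exists>\<zeta>. \<zeta> < lam) \<and> (\<forall>\<zeta><lam. \<exists>\<xi>. \<zeta> < \<xi> \<and> \<xi> < lam)"

definition eventually_const :: "'o::wellorder \<Rightarrow> ('o \<Rightarrow> 'a) \<Rightarrow> 'a \<Rightarrow> bool" where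
  "eventually_const lam g v \<longleftrightarrow> (\<exists>\<eta>0<lam. \<forall>\<eta>. \<eta>0 \<le> \<eta> \<and> \<eta> < lam \<longrightarrow> g \<eta> = v)"

definition is_run :: "('o::wellorder \<Rightarrow> 'c \<Rightarrow> 'c) \<Rightarrow> 'o \<Rightarrow> 'c config \<Rightarrow> ('o \<Rightarrow> 'c config) \<Rightarrow> bool" where
  "is_run \<sigma> \<theta> f0 F \<longleftrightarrow>
     (\<forall>\<eta>. (\<forall>\<zeta>. \<not> \<zeta> < \<eta>) \<longrightarrow> F \<eta> = f0) \<and>
     (\<forall>\<eta><\<theta>. F (osucc \<eta>) = act (\<sigma> \<eta>) (F \<eta>)) \<and>
     (\<forall>lam\<le>\<theta>. is_limit lam \<longrightarrow>
        (\<forall>c. F lam c = (if \<exists>v. eventually_const lam (\<lambda>\<eta>. F \<eta> c) v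
                       then (THE v. eventually_const lam (\<lambda>\<eta>. F \<eta> c) v) else None)))"

end

theory Submission
  imports Defs
begin

text \<open>A NaC cell can only be moved around by twists, and each cell moves inside a finite set of
  cells that every basic twist permutes: the cells whose coordinates lie among the coordinates
  of the starting cell and their negatives.  So along any run some cell of this finite set
  carries NaC at every stage.  At successor stages this is because twists are injective; at a
  limit stage, if every cell of the set had become eventually constant with a colour, the
  maximum of the finitely many thresholds would be a stage at which all of them are coloured.\<close>

lemma osucc_eqI:
  fixes \<zeta> \<eta> :: "'o::wellorder"
  assumes "\<zeta> < \<eta>" and "\<And>\<xi>. \<zeta> < \<xi> \<Longrightarrow> \<not> \<xi> < \<eta>"
  shows "osucc \<zeta> = \<eta>"
  unfolding osucc_def by (rule Least_equality) (use assms in \<open>auto simp: not_less\<close>)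

lemma ordinal_cases:
  fixes \<eta> :: "'o::wellorder"
  obtains (zero) "\<forall>\<zeta>. \<not> \<zeta> < \<eta>"
    | (succ) \<zeta> where "\<zeta> < \<eta>" "osucc \<zeta> = \<eta>"
    | (limit) "is_limit \<eta>"
proof -
  consider "\<forall>\<zeta>. \<not> \<zeta> < \<eta>" | "is_limit \<eta>"
    | \<zeta> where "\<zeta> < \<eta>" "\<forall>\<xi>. \<zeta> < \<xi> \<longrightarrow> \<not> \<xi> < \<eta>"
    unfolding is_limit_def by blast
  then show thesis
    using that osucc_eqI by metis
qed

lemma eventually_const_unique:
  assumes "eventually_const lam g v" and "eventually_const lam g w"
  shows "v = w"
proof -
  obtain a where a: "a < lam" "\<And>x. a \<le> x \<Longrightarrow> x < lam \<Longrightarrow> g x = v"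
    using assms(1) unfolding eventually_const_def by blast
  obtain b where b: "b < lam" "\<And>x. b \<le> x \<Longrightarrow> x < lam \<Longrightarrow> g x = w"
    using assms(2) unfolding eventually_const_def by blast
  have "a \<le> max a b" "b \<le> max a b" "max a b < lam"
    using a(1) b(1) by auto
  then show ?thesis
    using a(2) b(2) by metis
qed

lemma is_run_least:
  "is_run \<sigma> \<theta> f0 F \<Longrightarrow> \<forall>\<zeta>. \<not> \<zeta> < \<eta> \<Longrightarrow> F \<eta> = f0"
  unfolding is_run_def by blast

lemma is_run_osucc:
  "is_run \<sigma> \<theta> f0 F \<Longrightarrow> \<eta> < \<theta> \<Longrightarrow> F (osucc \<eta>) = act (\<sigma> \<eta>) (F \<eta>)"
  unfolding is_run_def by blast

lemma is_run_limit_eventually_const: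
  assumes "is_run \<sigma> \<theta> f0 F" and "lam \<le> \<theta>" and "is_limit lam" and "F lam c \<noteq> None"
  shows "eventually_const lam (\<lambda>\<eta>. F \<eta> c) (F lam c)"
proof -
  let ?P = "eventually_const lam (\<lambda>\<eta>. F \<eta> c)"
  have F_lam: "F lam c = (if \<exists>v. ?P v then (THE v. ?P v) else None)"
    using assms(1)[unfolded is_run_def, THEN conjunct2, THEN conjunct2, rule_format, OF assms(2,3)] .
  have ex: "\<exists>v. ?P v"
  proof (rule ccontr)
    assume none: "\<not> (\<exists>v. ?P v)"
    have "F lam c = None"
      using F_lam unfolding if_not_P[OF none] .
    with assms(4) show False ..
  qed
  then obtain v where v: "?P v" ..
  have "F lam c = (THE v. ?P v)"
    using F_lam unfolding if_P[OF ex] .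
  also have "\<dots> = v"
  proof (rule the_equality)
    show "?P v" by (fact v)
  next
    fix w
    assume "?P w"
    then show "w = v"
      using v by (rule eventually_const_unique)
  qed
  finally show ?thesis
    using v by (rule ssubst)
qed

lemma is_run_not_legal:
  fixes \<sigma> :: "'o::wellorder \<Rightarrow> 'c \<Rightarrow> 'c"
  assumes run: "is_run \<sigma> \<theta> f0 F" and "finite K" and "\<not> legal K f0"
    and stable: "\<forall>\<eta><\<theta>. inj (\<sigma> \<eta>) \<and> \<sigma> \<eta> ` K \<subseteq> K"
  shows "\<eta> \<le> \<theta> \<Longrightarrow> \<not> legal K (F \<eta>)"
proof (induction \<eta> rule: less_induct)
  case (less \<eta>)
  show ?case
  proof (cases \<eta> rule: ordinal_cases)
    case zero
    then show ?thesis
      using is_run_least[OF run] \<open>\<not> legal K f0\<close> by simp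
  next
    case (succ \<zeta>)
    with less.prems have "\<zeta> < \<theta>" by simp
    have "\<not> legal K (F \<zeta>)"
      using less.IH succ(1) \<open>\<zeta> < \<theta>\<close> by simp
    then obtain d where d: "d \<in> K" "F \<zeta> d = None"
      unfolding legal_def by blast
    have "\<sigma> \<zeta> d \<in> K"
      using stable \<open>\<zeta> < \<theta>\<close> d(1) by blast
    moreover have "F \<eta> (\<sigma> \<zeta> d) = None"
      using is_run_osucc[OF run \<open>\<zeta> < \<theta>\<close>] succ(2) stable \<open>\<zeta> < \<theta>\<close> d(2)
      unfolding act_def by simp
    ultimately show ?thesis
      unfolding legal_def by blast
  next
    case limit
    show ?thesis
    proof
      assume legal: "legal K (F \<eta>)"
      have "\<forall>c\<in>K. \<exists>e<\<eta>. \<forall>x. e \<le> x \<and> x < \<eta> \<longrightarrow> F x c = F \<eta> c"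
        using is_run_limit_eventually_const[OF run less.prems limit] legal
        unfolding legal_def eventually_const_def by blast
      then obtain g where g: "\<And>c. c \<in> K \<Longrightarrow> g c < \<eta>"
        "\<And>c x. c \<in> K \<Longrightarrow> g c \<le> x \<Longrightarrow> x < \<eta> \<Longrightarrow> F x c = F \<eta> c"
        by metis
      have "K \<noteq> {}"
        using \<open>\<not> legal K f0\<close> unfolding legal_def by blast
      define m where "m = Max (g ` K)"
      have "m < \<eta>"
        using g(1) Max_in[of "g ` K"] \<open>finite K\<close> \<open>K \<noteq> {}\<close> unfolding m_def by auto
      have "g c \<le> m" if "c \<in> K" for c
        using \<open>finite K\<close> that unfolding m_def by simp
      then have "legal K (F m)"
        using g(2) \<open>m < \<eta>\<close> legal unfolding legal_def by simp
      then show False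
        using less.IH[OF \<open>m < \<eta>\<close>] \<open>m < \<eta>\<close> less.prems by simp
    qed
  qed
qed

definition stable_under :: "('c \<Rightarrow> 'c) set \<Rightarrow> 'c set \<Rightarrow> bool" where
  "stable_under B K \<longleftrightarrow> (\<forall>s\<in>B. inj s \<and> s ` K \<subseteq> K)"

lemma is_run_preserves_illegal:
  fixes \<sigma> :: "'o::wellorder \<Rightarrow> 'c \<Rightarrow> 'c"
  assumes confined: "\<And>c. c \<in> Cells \<Longrightarrow>
      \<exists>K. finite K \<and> c \<in> K \<and> K \<subseteq> Cells \<and> stable_under B K"
    and moves: "\<forall>\<eta><\<theta>. \<sigma> \<eta> \<in> B" and "\<not> legal Cells f0" and run: "is_run \<sigma> \<theta> f0 F"
  shows "\<not> legal Cells (F \<theta>)"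
proof -
  obtain c where c: "c \<in> Cells" "f0 c = None"
    using \<open>\<not> legal Cells f0\<close> unfolding legal_def by blast
  obtain K where K: "finite K" "c \<in> K" "K \<subseteq> Cells" "stable_under B K"
    using confined[OF c(1)] by blast
  have "\<not> legal K f0"
    using K(2) c(2) unfolding legal_def by blast
  moreover have "\<forall>\<eta><\<theta>. inj (\<sigma> \<eta>) \<and> \<sigma> \<eta> ` K \<subseteq> K"
    using K(4) moves unfolding stable_under_def by simp
  ultimately have "\<not> legal K (F \<theta>)"
    by (intro is_run_not_legal[OF run K(1)]) simp_all
  then show ?thesis
    using K(3) unfolding legal_def by blast
qed

lemma funpow_image_subset: "f ` K \<subseteq> K \<Longrightarrow> (f ^^ n) ` K \<subseteq> K"
  by (induction n) auto

lemma stable_under_funpows: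
  assumes "\<And>i \<alpha>. inj (t i \<alpha>) \<and> t i \<alpha> ` K \<subseteq> K"
  shows "stable_under {t i \<alpha> ^^ k | i \<alpha> k. k \<in> {1, 2, 3::nat}} K"
  unfolding stable_under_def
proof
  fix s
  assume "s \<in> {t i \<alpha> ^^ k | i \<alpha> k. k \<in> {1, 2, 3::nat}}"
  then obtain i \<alpha> k where "s = t i \<alpha> ^^ k"
    by blast
  with assms[of i \<alpha>] show "inj s \<and> s ` K \<subseteq> K"
    by (simp add: funpow_image_subset)
qed

lemma cneg_cneg [simp]: "cneg (cneg a) = a"
  by (cases a) auto

lemma rot_axis_rot_axis [simp]: "rot_axis i (rot_axis i j) = j"
  by (cases i; cases j) auto

lemma bij_rot_axis: "bij (rot_axis i)"
  by (rule involuntory_imp_bij) simp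

lemma UNIV_axis: "UNIV = {AX, AY, AZ}"
  using axis.exhaust by blast

lemma pcoord_rot_same_axis [simp]: "pcoord (rot i p) i = pcoord p i"
  by (cases p; cases i) auto

lemma is_inf_cneg [simp]: "is_inf (cneg a) = is_inf a"
  by (cases a) (auto simp: is_inf_def)

lemma is_inf_pcoord_rot: "is_inf (pcoord (rot i p) j) = is_inf (pcoord p (rot_axis i j))"
  by (cases p; cases i; cases j) auto

lemma inj_rot: "inj (rot i)"
proof (rule injI)
  fix p q
  assume "rot i p = rot i q"
  then show "p = q"
    by (cases p; cases q; cases i) (auto dest: arg_cong[of _ _ cneg])
qed

lemma rot_in_cube: "cneg ` A \<subseteq> A \<Longrightarrow> p \<in> A \<times> A \<times> A \<Longrightarrow> rot i p \<in> A \<times> A \<times> A"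
  by (cases p; cases i) auto

lemma rot_edgeless_cells:
  assumes "p \<in> edgeless_cells"
  shows "rot i p \<in> edgeless_cells"
proof -
  let ?S = "{j. is_inf (pcoord p j)}"
  have "{j. is_inf (pcoord (rot i p) j)} = rot_axis i -` ?S"
    by (simp add: is_inf_pcoord_rot)
  moreover have "card (rot_axis i -` ?S) = card ?S"
    using bij_is_surj[OF bij_rot_axis] by (intro card_vimage_inj bij_is_inj[OF bij_rot_axis]) simp
  ultimately have "card {j. is_inf (pcoord (rot i p) j)} = card ?S"
    by simp
  with assms show ?thesis
    unfolding edgeless_cells_def by simp
qed

lemma inj_twist_pt: "inj (twist_pt i \<alpha>)"
proof (rule injI)
  fix p q
  assume "twist_pt i \<alpha> p = twist_pt i \<alpha> q"
  then show "p = q"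
    by (cases "pcoord p i = \<alpha>"; cases "pcoord q i = \<alpha>")
      (auto simp: twist_pt_def dest: injD[OF inj_rot])
qed

lemma fst_twist_edged: "fst (twist_edged i \<alpha> c) = twist_pt i \<alpha> (fst c)"
  unfolding twist_edged_def twist_pt_def by simp

lemma inj_twist_edged: "inj (twist_edged i \<alpha>)"
proof (rule injI)
  fix c d
  assume eq: "twist_edged i \<alpha> c = twist_edged i \<alpha> d"
  then have "fst c = fst d"
    using injD[OF inj_twist_pt] by (metis fst_twist_edged)
  moreover have "snd c = snd d"
    using eq \<open>fst c = fst d\<close> injD[OF bij_is_inj[OF bij_rot_axis]]
    unfolding twist_edged_def by (auto split: if_splits)
  ultimately show "c = d"
    by (rule prod_eqI)
qed

definition coord_closure :: "'l point \<Rightarrow> 'l coord set" where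
  "coord_closure p = range (pcoord p) \<union> cneg ` range (pcoord p)"

lemma finite_coord_closure: "finite (coord_closure p)"
  unfolding coord_closure_def UNIV_axis by simp

lemma cneg_coord_closure: "cneg ` coord_closure p \<subseteq> coord_closure p"
  unfolding coord_closure_def by (auto simp: image_image)

lemma point_in_coord_closure_cube: "p \<in> coord_closure p \<times> coord_closure p \<times> coord_closure p"
proof -
  obtain x y z where "p = (x, y, z)"
    by (cases p)
  moreover have "pcoord p ` {AX, AY, AZ} \<subseteq> coord_closure p"
    unfolding coord_closure_def UNIV_axis by blast
  ultimately show ?thesis
    by simp
qed

lemma edgeless_cells_confined:
  assumes "c \<in> edgeless_cells"
  shows "\<exists>K. finite K \<and> c \<in> K \<and> K \<subseteq> edgeless_cells \<and>
           stable_under basic_edgeless K"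
proof (intro exI conjI)
  let ?A = "coord_closure c"
  let ?K = "edgeless_cells \<inter> ?A \<times> ?A \<times> ?A"
  show "finite ?K"
    using finite_coord_closure by blast
  show "c \<in> ?K"
    using assms point_in_coord_closure_cube by blast
  show "?K \<subseteq> edgeless_cells"
    by blast
  have "twist_pt i \<alpha> p \<in> ?K" if "p \<in> ?K" for i \<alpha> p
    using that rot_edgeless_cells[of p i] rot_in_cube[OF cneg_coord_closure, of p c i]
    unfolding twist_pt_def by simp
  then have "inj (twist_pt i \<alpha>) \<and> twist_pt i \<alpha> ` ?K \<subseteq> ?K" for i \<alpha>
    using inj_twist_pt by blast
  then show "stable_under basic_edgeless ?K"
    unfolding basic_edgeless_def by (rule stable_under_funpows)
qed

lemma edged_cells_confined:
  assumes "c \<in> edged_cells"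
  shows "\<exists>K. finite K \<and> c \<in> K \<and> K \<subseteq> edged_cells \<and>
           stable_under basic_edged K"
proof (intro exI conjI)
  let ?A = "coord_closure (fst c)"
  let ?K = "edged_cells \<inter> (?A \<times> ?A \<times> ?A) \<times> UNIV"
  show "finite ?K"
    using finite_coord_closure unfolding UNIV_axis by blast
  show "c \<in> ?K"
    using assms point_in_coord_closure_cube by (cases c) auto
  show "?K \<subseteq> edged_cells"
    by blast
  have "twist_edged i \<alpha> d \<in> ?K" if "d \<in> ?K" for i \<alpha> d
  proof (cases "pcoord (fst d) i = \<alpha>")
    case True
    have "is_inf (pcoord (rot i (fst d)) (rot_axis i (snd d)))"
      using that by (simp add: is_inf_pcoord_rot edged_cells_def split_beta)
    moreover have "fst d \<in> ?A \<times> ?A \<times> ?A"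
      using that by (simp add: mem_Times_iff)
    then have "rot i (fst d) \<in> ?A \<times> ?A \<times> ?A"
      by (rule rot_in_cube[OF cneg_coord_closure])
    ultimately show ?thesis
      using True unfolding twist_edged_def edged_cells_def by simp
  qed (use that in \<open>simp add: twist_edged_def\<close>)
  then have "inj (twist_edged i \<alpha>) \<and> twist_edged i \<alpha> ` ?K \<subseteq> ?K" for i \<alpha>
    using inj_twist_edged by blast
  then show "stable_under basic_edged ?K"
    unfolding basic_edged_def by (rule stable_under_funpows)
qed

theorem mainTheorem18:
  assumes "infinite (UNIV :: 'l set)"
  shows
   "(\<forall>(\<sigma> :: 'o::wellorder \<Rightarrow> 'l point \<Rightarrow> 'l point) \<theta> f0 F.
       (\<forall>\<eta><\<theta>. \<sigma> \<eta> \<in> basic_edgeless) \<and> \<not> legal edgeless_cells f0 \<and> is_run \<sigma> \<theta> f0 F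
       \<longrightarrow> \<not> legal edgeless_cells (F \<theta>)) \<and>
    (\<forall>(\<sigma> :: 'o \<Rightarrow> ('l point \<times> axis) \<Rightarrow> ('l point \<times> axis)) \<theta> f0 F.
       (\<forall>\<eta><\<theta>. \<sigma> \<eta> \<in> basic_edged) \<and> \<not> legal edged_cells f0 \<and> is_run \<sigma> \<theta> f0 F
       \<longrightarrow> \<not> legal edged_cells (F \<theta>))"
  using is_run_preserves_illegal[OF edgeless_cells_confined]
    is_run_preserves_illegal[OF edged_cells_confined]
  by blast

end
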